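(* Let $G=(\mathcal{V},\mathcal{C})$, and let $G^M_0=(\mathcal{V}^M_0,\mathcal{E}^M_0)$ with $\mathcal{V}^M_0=\{v: v\subseteq c\text{ for some }c\in\mathcal{C}\}$ and $\mathcal{E}^M_0=\{(c\to s): c,s\in\mathcal{V}^M_0,\ s\subsetneq c\}$. Let $\mathcal{C}_m=\{c\in\mathcal{C}:\ \text{there is no }\hat c\in\mathcal{C}\text{ with }c\subsetneq\hat c\}$ be the set of maximal clusters and $\mathcal{I}_m=\{c\cap c': c,c'\in\mathcal{C}_m\}$. Then every $v\in\mathcal{V}^M_0\setminus(\mathcal{C}\cup\mathcal{I}_m)$ is a redundant node w.r.t. $G^M_0$.
   Context: $\mathcal{V}=\{1,\dots,n\}$, each $x_i$ ranges over a finite set, $\mathbf{x}_s=(x_i)_{i\in s}$; $\mathcal{C}$ is a collection of subsets of $\mathcal{V}$. A marginal polytope diagram of $G=(\mathcal{V},\mathcal{C})$ is a pair $G^M=(\mathcal{V}^M,\mathcal{E}^M)$ with $\mathcal{C}\subseteq\mathcal{V}^M\subseteq 2^{\mathcal{V}}$ and $\mathcal{E}^M$ a set of directed edges $(c\to s)$ with $c,s\in\mathcal{V}^M$, $s\subseteq c$ ($G^M_0$ is one). For a set $E$ of pairs $(c\to s)$ with $s\subseteq c$, let $P(E)$ be the set of families $\boldsymbol\mu=(\mu_c)_{c\in\mathcal{C}}$ of real functions $\mu_c(\mathbf{x}_c)$ for which there exist real functions $\mu_w(\mathbf{x}_w)$ for all other subsets $w\subseteq\mathcal{V}$ with $\sum_{\mathbf{x}_{c\setminus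 s}}\mu_c(\mathbf{x}_c)=\mu_s(\mathbf{x}_s)$ for all $(c\to s)\in E$, $\mathbf{x}_s$. A node $v\in\mathcal{V}^M\setminus\mathcal{C}$ is redundant w.r.t. $G^M$ if $P(\mathcal{E}^M)=P(\hat{\mathcal{E}}^M)$, where $\hat{\mathcal{E}}^M=\big[\mathcal{E}^M\setminus(\{(c\to v)\in\mathcal{E}^M\}\cup\{(v\to s)\in\mathcal{E}^M\})\big]\cup\{(c\to s):(c\to v)\in\mathcal{E}^M,(v\to s)\in\mathcal{E}^M\}$. *)

theory Defs
  imports Complex_Main "HOL-Library.FuncSet"
begin

text \<open>Variables are natural numbers; a variable i takes values in D i.
  An assignment x_s to the variables of a set s is an extensional function
  in PiE s D. A family of local functions is a map mu :: nat set => (nat => 'a) => real,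
  where mu w is the function mu_w(x_w) on assignments of w.
  A directed edge (c -> s) is represented as the pair (c, s).\<close>

definition marg :: "(nat \<Rightarrow> 'a set) \<Rightarrow> ((nat \<Rightarrow> 'a) \<Rightarrow> real) \<Rightarrow> nat set \<Rightarrow> nat set \<Rightarrow> (nat \<Rightarrow> 'a) \<Rightarrow> real" where
  "marg D f c s xs = (\<Sum>y \<in> {y \<in> PiE c D. restrict y s = xs}. f y)"

text \<open>P(E): families (mu_c)_{c in C} for which there are functions mu_w for all other
  subsets w satisfying the marginalisation constraints of all edges in E.\<close>
definition Pset :: "(nat \<Rightarrow> 'a set) \<Rightarrow> nat set set \<Rightarrow> (nat set \<times> nat set) set
    \<Rightarrow> (nat set \<Rightarrow> (nat \<Rightarrow> 'a) \<Rightarrow> real) set" where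
  "Pset D C E = {mu. \<exists>nu. (\<forall>c\<in>C. \<forall>x\<in>PiE c D. nu c x = mu c x) \<and>
      (\<forall>(c, s)\<in>E. \<forall>xs\<in>PiE s D. marg D (nu c) c s xs = nu s xs)}"

definition edges_hat :: "(nat set \<times> nat set) set \<Rightarrow> nat set \<Rightarrow> (nat set \<times> nat set) set" where
  "edges_hat EM v = (EM - ({e \<in> EM. snd e = v} \<union> {e \<in> EM. fst e = v}))
      \<union> {(c, s). (c, v) \<in> EM \<and> (v, s) \<in> EM}"

definition redundant :: "(nat \<Rightarrow> 'a set) \<Rightarrow> nat set set \<Rightarrow> nat set set
    \<Rightarrow> (nat set \<times> nat set) set \<Rightarrow> nat set \<Rightarrow> bool" where
  "redundant D C VM EM v \<longleftrightarrow> v \<in> VM - C \<and> Pset D C EM = Pset D C (edges_hat EM v)"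

definition VM0 :: "nat set set \<Rightarrow> nat set set" where
  "VM0 C = {v. \<exists>c\<in>C. v \<subseteq> c}"

definition EM0 :: "nat set set \<Rightarrow> (nat set \<times> nat set) set" where
  "EM0 C = {(c, s). c \<in> VM0 C \<and> s \<in> VM0 C \<and> s \<subset> c}"

definition maximal_clusters :: "nat set set \<Rightarrow> nat set set" where
  "maximal_clusters C = {c \<in> C. \<not> (\<exists>c'\<in>C. c \<subset> c')}"

definition max_intersections :: "nat set set \<Rightarrow> nat set set" where
  "max_intersections C = {c \<inter> c' | c c'. c \<in> maximal_clusters C \<and> c' \<in> maximal_clusters C}"

end

theory Submission
  imports Defs
begin

text \<open>Since \<open>EM0 C\<close> is transitive, removing \<open>v\<close> merely drops the constraints at \<open>v\<close>, so one has
  to extend a family \<open>nu\<close> that is consistent on all edges avoiding \<open>v\<close> to \<open>v\<close> itself. Take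
  \<open>nu v\<close> to be the marginal of \<open>nu m\<close> for a maximal cluster \<open>m \<supseteq> v\<close>. Any \<open>a \<supset> v\<close> lies in a maximal
  cluster \<open>m'\<close>, and the marginals of \<open>nu a\<close>, \<open>nu m'\<close> and \<open>nu m\<close> onto \<open>v\<close> agree because they all
  factor through \<open>m \<inter> m'\<close>, which strictly contains \<open>v\<close> as \<open>v\<close> is not an intersection of maximal
  clusters; marginalisation being transitive, the edges out of \<open>v\<close> are then satisfied as well.\<close>

lemma marg_marg:
  assumes "finite c" and "\<forall>i\<in>c. finite (D i)" and "s \<subseteq> w" and "w \<subseteq> c"
    and g: "\<forall>y\<in>PiE w D. g y = marg D f c w y"
  shows "marg D g w s xs = marg D f c s xs"
proof -
  let ?A = "{z\<in>PiE c D. restrict z s = xs}"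
  let ?B = "{y\<in>PiE w D. restrict y s = xs}"
  have "finite (PiE c D)" "finite (PiE w D)"
    using assms(1,2,4) by (auto intro!: finite_PiE intro: finite_subset)
  then have fin: "finite ?A" "finite ?B" by auto
  have "marg D g w s xs = (\<Sum>y\<in>?B. g y)" by (simp add: marg_def)
  also have "\<dots> = (\<Sum>y\<in>?B. marg D f c w y)" using g by (intro sum.cong) auto
  also have "\<dots> = (\<Sum>y\<in>?B. \<Sum>z\<in>{z. z \<in> ?A \<and> restrict z w = y}. f z)"
    unfolding marg_def
    by (intro sum.cong refl arg_cong[where f = "sum f"])
      (use \<open>s \<subseteq> w\<close> in \<open>auto simp: restrict_restrict Int_absorb1\<close>)
  also have "\<dots> = sum f ?A"
    by (rule sum.group[OF fin])
      (use assms(3,4) in \<open>auto simp: restrict_restrict Int_absorb1 PiE_def extensional_def Pi_def\<close>)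
  finally show ?thesis unfolding marg_def .
qed

lemma edges_hat_eq_Diff_if_trans:
  assumes "trans E" and "(v, v) \<notin> E"
  shows "edges_hat E v = E - ({e \<in> E. snd e = v} \<union> {e \<in> E. fst e = v})"
proof -
  have "{(c, s). (c, v) \<in> E \<and> (v, s) \<in> E} \<subseteq> E - ({e \<in> E. snd e = v} \<union> {e \<in> E. fst e = v})"
    using assms by (auto dest: transD)
  then show ?thesis unfolding edges_hat_def by blast
qed

lemma Pset_antimono: "E \<subseteq> E' \<Longrightarrow> Pset D C E' \<subseteq> Pset D C E"
  unfolding Pset_def by blast

lemma Pset_extend_at_node:
  assumes "v \<notin> C"
    and nuC: "\<forall>c\<in>C. \<forall>x\<in>PiE c D. nu c x = mu c x"
    and away: "\<And>c s xs. (c, s) \<in> E \<Longrightarrow> c \<noteq> v \<Longrightarrow> s \<noteq> v \<Longrightarrow> xs \<in> PiE s D \<Longrightarrow>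
                 marg D (nu c) c s xs = nu s xs"
    and into: "\<And>c xs. (c, v) \<in> E \<Longrightarrow> xs \<in> PiE v D \<Longrightarrow> marg D (nu c) c v xs = f xs"
    and out: "\<And>s xs. (v, s) \<in> E \<Longrightarrow> xs \<in> PiE s D \<Longrightarrow> marg D f v s xs = nu s xs"
    and "(v, v) \<notin> E"
  shows "mu \<in> Pset D C E"
  unfolding Pset_def
proof (intro CollectI exI[of _ "nu(v := f)"] conjI ballI; clarify?)
  show "(nu(v := f)) c x = mu c x" if "c \<in> C" "x \<in> PiE c D" for c x
    using that nuC \<open>v \<notin> C\<close> by auto
  show "marg D ((nu(v := f)) c) c s xs = (nu(v := f)) s xs" if "(c, s) \<in> E" "xs \<in> PiE s D" for c s xs
    using that away into out \<open>(v, v) \<notin> E\<close> by (cases "c = v"; cases "s = v") auto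
qed

lemma maximal_clusters_subset_VM0: "maximal_clusters C \<subseteq> VM0 C"
  unfolding maximal_clusters_def VM0_def by auto

lemma VM0_subset_maximal_cluster:
  assumes "finite C" and "a \<in> VM0 C"
  obtains m where "m \<in> maximal_clusters C" and "a \<subseteq> m"
proof -
  obtain c where c: "c \<in> C" "a \<subseteq> c" using assms(2) unfolding VM0_def by blast
  obtain m where m: "m \<in> C" "c \<subseteq> m" "\<forall>b\<in>C. m \<subseteq> b \<longrightarrow> m = b"
    using finite_has_maximal2[OF assms(1) c(1)] by auto
  then have "m \<in> maximal_clusters C" unfolding maximal_clusters_def by auto
  moreover have "a \<subseteq> m" using c(2) m(2) by blast
  ultimately show thesis by (rule that)
qed

lemma edges_hat_EM0: "edges_hat (EM0 C) v = {(a, b) \<in> EM0 C. a \<noteq> v \<and> b \<noteq> v}"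
proof -
  have "edges_hat (EM0 C) v = EM0 C - ({e \<in> EM0 C. snd e = v} \<union> {e \<in> EM0 C. fst e = v})"
    by (rule edges_hat_eq_Diff_if_trans) (auto simp: EM0_def trans_def)
  then show ?thesis by force
qed

lemma marg_onto_non_intersection_indep:
  assumes fin: "finite (\<Union>C)" "\<forall>i\<in>\<Union>C. finite (D i)"
    and nu: "\<And>a b xs. (a, b) \<in> EM0 C \<Longrightarrow> a \<noteq> v \<Longrightarrow> b \<noteq> v \<Longrightarrow> xs \<in> PiE b D \<Longrightarrow>
               marg D (nu a) a b xs = nu b xs"
    and vI: "v \<notin> max_intersections C"
    and m: "m \<in> maximal_clusters C" "v \<subseteq> m"
    and a: "a \<in> VM0 C" "v \<subset> a"
  shows "marg D (nu a) a v xs = marg D (nu m) m v xs"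
proof -
  have down: "marg D (nu b) b v xs = marg D (nu c) c v xs"
    if c: "c \<in> VM0 C" and b: "b \<in> VM0 C" "v \<subset> b" "b \<subseteq> c" for b c
  proof (cases "b = c")
    case False
    then have "(c, b) \<in> EM0 C" "c \<noteq> v" "b \<noteq> v" using b c unfolding EM0_def by auto
    then have "\<forall>y\<in>PiE b D. nu b y = marg D (nu c) c b y"
      using nu by simp
    moreover have "c \<subseteq> \<Union>C" using c unfolding VM0_def by blast
    then have "finite c" "\<forall>i\<in>c. finite (D i)" using finite_subset[OF _ fin(1)] fin(2) by blast+
    ultimately show ?thesis
      using b by (intro marg_marg) auto
  qed simp
  have via_intersection: "marg D (nu m') m' v xs = marg D (nu m) m v xs"
    if m': "m' \<in> maximal_clusters C" "v \<subseteq> m'" for m'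
  proof -
    have "m \<inter> m' \<in> max_intersections C"
      using m m' unfolding max_intersections_def by blast
    then have v: "v \<subset> m \<inter> m'" using vI m m' by blast
    have "m \<in> C" "m' \<in> C" using m(1) m'(1) unfolding maximal_clusters_def by blast+
    then have "m \<in> VM0 C" "m' \<in> VM0 C" "m \<inter> m' \<in> VM0 C" unfolding VM0_def by blast+
    then show ?thesis
      using down[where b = "m \<inter> m'" and c = m'] down[where b = "m \<inter> m'" and c = m] v by simp
  qed
  have "finite C" using fin(1) by (rule finite_UnionD)
  then obtain m' where m': "m' \<in> maximal_clusters C" "a \<subseteq> m'"
    using VM0_subset_maximal_cluster a(1) by blast
  have "m' \<in> VM0 C" using maximal_clusters_subset_VM0 m'(1) by blast
  then have "marg D (nu a) a v xs = marg D (nu m') m' v xs"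
    using down[OF _ a(1) a(2) m'(2)] by simp
  also have "\<dots> = marg D (nu m) m v xs"
    using via_intersection m' a(2) by blast
  finally show ?thesis .
qed

lemma Pset_EM0_avoiding_non_intersection:
  assumes fin: "finite (\<Union>C)" "\<forall>i\<in>\<Union>C. finite (D i)"
    and v: "v \<in> VM0 C - (C \<union> max_intersections C)"
  shows "Pset D C {(a, b) \<in> EM0 C. a \<noteq> v \<and> b \<noteq> v} \<subseteq> Pset D C (EM0 C)"
proof
  fix mu assume "mu \<in> Pset D C {(a, b) \<in> EM0 C. a \<noteq> v \<and> b \<noteq> v}"
  then obtain nu where nuC: "\<forall>c\<in>C. \<forall>x\<in>PiE c D. nu c x = mu c x"
    and nuE: "\<forall>(a, b)\<in>{(a, b) \<in> EM0 C. a \<noteq> v \<and> b \<noteq> v}. \<forall>xs\<in>PiE b D. marg D (nu a) a b xs = nu b xs"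
    unfolding Pset_def by blast
  have nu: "marg D (nu a) a b xs = nu b xs"
    if "(a, b) \<in> EM0 C" "a \<noteq> v" "b \<noteq> v" "xs \<in> PiE b D" for a b xs
    using nuE that by blast
  have "finite C" using fin(1) by (rule finite_UnionD)
  then obtain m where m: "m \<in> maximal_clusters C" "v \<subseteq> m"
    using VM0_subset_maximal_cluster v by blast
  have "m \<in> VM0 C" using maximal_clusters_subset_VM0 m(1) by blast
  have "v \<noteq> m" using m v unfolding max_intersections_def by blast
  show "mu \<in> Pset D C (EM0 C)"
  proof (rule Pset_extend_at_node[where f = "marg D (nu m) m v"])
    show "marg D (nu c) c v xs = marg D (nu m) m v xs" if "(c, v) \<in> EM0 C" for c xs
    proof (rule marg_onto_non_intersection_indep[OF fin nu _ m])
      show "c \<in> VM0 C" "v \<subset> c" using that unfolding EM0_def by auto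
      show "v \<notin> max_intersections C" using v by blast
    qed
    show "marg D (marg D (nu m) m v) v s xs = nu s xs" if "(v, s) \<in> EM0 C" and xs: "xs \<in> PiE s D" for s xs
    proof -
      have "(m, s) \<in> EM0 C" "s \<subset> v" using that \<open>m \<in> VM0 C\<close> m(2) unfolding EM0_def by auto
      have "m \<subseteq> \<Union>C" using \<open>m \<in> VM0 C\<close> unfolding VM0_def by blast
      then have "finite m" "\<forall>i\<in>m. finite (D i)" using finite_subset[OF _ fin(1)] fin(2) by blast+
      then have "marg D (marg D (nu m) m v) v s xs = marg D (nu m) m s xs"
        using \<open>s \<subset> v\<close> m(2) by (intro marg_marg) auto
      also have "\<dots> = nu s xs"
        using nu \<open>(m, s) \<in> EM0 C\<close> \<open>v \<noteq> m\<close> \<open>s \<subset> v\<close> xs by blast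
      finally show ?thesis .
    qed
    show "v \<notin> C" using v by blast
    show "(v, v) \<notin> EM0 C" by (simp add: EM0_def)
  qed (use nuC nu in auto)
qed

theorem proposition11:
  fixes n :: nat and D :: "nat \<Rightarrow> 'a set" and C :: "nat set set" and v :: "nat set"
  assumes "\<forall>i\<in>{1..n}. finite (D i)"
    and "\<forall>c\<in>C. c \<subseteq> {1..n}"
    and "v \<in> VM0 C - (C \<union> max_intersections C)"
  shows "redundant D C (VM0 C) (EM0 C) v"
proof -
  have "\<Union>C \<subseteq> {1..n}" using assms(2) by blast
  then have fin: "finite (\<Union>C)" "\<forall>i\<in>\<Union>C. finite (D i)"
    using assms(1) by (auto intro: finite_subset)
  have "Pset D C (edges_hat (EM0 C) v) = Pset D C (EM0 C)"
    unfolding edges_hat_EM0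
  proof (rule equalityI)
    show "Pset D C {(a, b) \<in> EM0 C. a \<noteq> v \<and> b \<noteq> v} \<subseteq> Pset D C (EM0 C)"
      by (rule Pset_EM0_avoiding_non_intersection[OF fin assms(3)])
    show "Pset D C (EM0 C) \<subseteq> Pset D C {(a, b) \<in> EM0 C. a \<noteq> v \<and> b \<noteq> v}"
      by (rule Pset_antimono) auto
  qed
  then show ?thesis unfolding redundant_def using assms(3) by blast
qed

end
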